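(* Let $d\ge2$ and let $\theta=(\theta_{ij})_{1\le i+j\le d}\in\mathbb{R}^N$ (with $N$ the number of pairs of nonnegative integers $(i,j)$ with $1\le i+j\le d$). Let $p(x;\theta)=\theta_{d0}x^d+\theta_{d-1,1}x^{d-1}+\dots+\theta_{1,d-1}x+\theta_{0d}$ and let $D(\theta)$ be the discriminant of $p(x;\theta)=0$ (as a polynomial in the coefficients). Define $$\Theta'=\{\theta: p(a;\theta)<0\ \forall a\ge0,\ \theta_{0d}<0,\ \theta_{d0}<0\},$$ $$\Theta''=\{\theta:\theta_{d0}<0,\ \theta_{0d}<0\}\setminus\{\theta: D(\theta)=0\},$$ let $\Theta''_i$, $i\in I$, be the connected components of $\Theta''$, and let $I^*=\{i\in I:\Theta''_i\cap\Theta'\neq\emptyset\}$. Then, except for a set of Lebesgue measure zero, $$\Theta'=\bigcup_{i\in I^*}\Theta''_i .$$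
   Context: $\Theta'$ is the parameter space of the proper order-$d$ bivariate exponential-polynomial model with density proportional to $\exp(\sum_{1\le i+j\le d}\theta_{ij}x^iy^j)$ on the positive orthant. *)

theory Defs
  imports "HOL-Analysis.Analysis" "HOL-Probability.Probability" "Subresultants.Resultant_Prelim"
begin

definition idx :: "nat \<Rightarrow> (nat \<times> nat) set" where
  "idx d = {(i,j). 1 \<le> i + j \<and> i + j \<le> d}"

text \<open>The parameter space R^N, realised as extensional functions on idx d,
  with its Euclidean (product) topology and Lebesgue (product) measure.\<close>
definition param_space :: "nat \<Rightarrow> ((nat \<times> nat) \<Rightarrow> real) set" where
  "param_space d = PiE (idx d) (\<lambda>_. UNIV)"

definition param_top :: "nat \<Rightarrow> ((nat \<times> nat) \<Rightarrow> real) topology" where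
  "param_top d = product_topology (\<lambda>_. euclideanreal) (idx d)"

definition param_lebesgue :: "nat \<Rightarrow> ((nat \<times> nat) \<Rightarrow> real) measure" where
  "param_lebesgue d = PiM (idx d) (\<lambda>_. lborel)"

definition ppoly :: "nat \<Rightarrow> ((nat \<times> nat) \<Rightarrow> real) \<Rightarrow> real poly" where
  "ppoly d \<theta> = (\<Sum>k\<le>d. monom (\<theta> (k, d - k)) k)"

definition discriminant :: "real poly \<Rightarrow> real" where
  "discriminant p = (-1) ^ (degree p * (degree p - 1) div 2)
      * resultant p (pderiv p) / lead_coeff p"

definition Theta1 :: "nat \<Rightarrow> ((nat \<times> nat) \<Rightarrow> real) set" where
  "Theta1 d = {\<theta> \<in> param_space d. (\<forall>a::real. a \<ge> 0 \<longrightarrow> poly (ppoly d \<theta>) a < 0)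
                  \<and> \<theta> (0, d) < 0 \<and> \<theta> (d, 0) < 0}"

definition Theta2 :: "nat \<Rightarrow> ((nat \<times> nat) \<Rightarrow> real) set" where
  "Theta2 d = {\<theta> \<in> param_space d. \<theta> (d, 0) < 0 \<and> \<theta> (0, d) < 0}
              - {\<theta>. discriminant (ppoly d \<theta>) = 0}"

end

theory Submission
  imports
    Defs
    "Subresultants.Subresultant_Gcd"
    "HOL-Computational_Algebra.Field_as_Ring"
    "HOL-Computational_Algebra.Fundamental_Theorem_Algebra"
begin

(* Off the discriminant locus, p(x;theta) has only simple roots. So if theta lies in Theta2 but
   not in Theta1, then p(a) >= 0 for some a >= 0, and since p(0) < 0 and every root is simple,
   p(b) > 0 for some b >= 0; this is an open condition, hence Theta1 \<inter> Theta2 is closed in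
   Theta2. It is also open: homogenising p turns "p < 0 on [0, oo) and theta_{d0} < 0" into
   negativity of a jointly continuous function on the compact segment [0, 1]. So the components
   of Theta2 meeting Theta1 cover exactly Theta1 \<inter> Theta2, and the rest of Theta1 lies in the
   discriminant locus {theta_{d0} \<noteq> 0, D(theta) = 0}. That locus is null by Fubini in the
   coordinate theta_{0d}: with the other coefficients fixed, p has a multiple root only if
   -theta_{0d} is one of the finitely many critical values of the remaining polynomial. *)

section \<open>Polynomials with simple roots\<close>

lemma resultant_eq_0_if_common_root:
  fixes p q :: "real poly"
  assumes "p \<noteq> 0" "poly p x = 0" "poly q x = 0"
  shows "resultant p q = 0"
proof -
  have "[:-x, 1:] dvd gcd p q"
    using assms(2,3) by (simp add: poly_eq_0_iff_dvd)
  then have "degree [:-x, 1:] \<le> degree (gcd p q)"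
    using assms(1) by (intro dvd_imp_degree_le) auto
  then show ?thesis
    by (simp add: resultant_0_gcd)
qed

lemma resultant_eq_0_imp_common_root:
  fixes p q :: "complex poly"
  assumes "resultant p q = 0"
  obtains z where "poly p z = 0" "poly q z = 0"
proof -
  have "\<not> constant (poly (gcd p q))"
    using assms by (simp add: resultant_0_gcd constant_degree)
  then obtain z where "poly (gcd p q) z = 0"
    using fundamental_theorem_of_algebra by blast
  then have "[:-z, 1:] dvd p" "[:-z, 1:] dvd q"
    by (meson dvd_trans gcd_dvd1 gcd_dvd2 poly_eq_0_iff_dvd)+
  then show ?thesis
    using that by (simp add: poly_eq_0_iff_dvd)
qed

lemma finite_shifts_with_multiple_root:
  fixes q :: "real poly"
  assumes "pderiv q \<noteq> 0"
  shows "finite {c. resultant (q + [:c:]) (pderiv (q + [:c:])) = 0}"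
proof -
  let ?Q = "map_poly complex_of_real q"
  let ?S = "{c. resultant (q + [:c:]) (pderiv (q + [:c:])) = 0}"
  \<comment> \<open>A multiple root z of q + c is a critical point of q with c = -q(z).\<close>
  have sub: "(of_real :: real \<Rightarrow> complex) ` ?S \<subseteq> (\<lambda>z. - poly ?Q z) ` {z. poly (pderiv ?Q) z = 0}"
  proof
    fix w :: complex assume "w \<in> of_real ` ?S"
    then obtain c where c: "c \<in> ?S" and w: "w = of_real c" by blast
    have "resultant (map_poly complex_of_real (q + [:c:])) (map_poly complex_of_real (pderiv q))
        = of_real (resultant (q + [:c:]) (pderiv q))"
      by (rule of_real_hom.resultant_hom)
    then have "resultant (?Q + [:of_real c:]) (pderiv ?Q) = 0"
      using c by (simp add: pderiv_add hom_distribs)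
    then obtain z where z: "poly (?Q + [:of_real c:]) z = 0" "poly (pderiv ?Q) z = 0"
      by (rule resultant_eq_0_imp_common_root)
    then have "w = - poly ?Q z"
      using w by (simp add: add_eq_0_iff)
    with z(2) show "w \<in> (\<lambda>z. - poly ?Q z) ` {z. poly (pderiv ?Q) z = 0}"
      by blast
  qed
  have "pderiv ?Q \<noteq> 0"
    using assms by (simp add: of_real_hom.map_poly_pderiv[symmetric])
  then have "finite ((\<lambda>z. - poly ?Q z) ` {z. poly (pderiv ?Q) z = 0})"
    by (intro finite_imageI poly_roots_finite)
  with sub have "finite ((of_real :: real \<Rightarrow> complex) ` ?S)"
    by (rule finite_subset)
  then show ?thesis
    by (rule finite_imageD) (simp add: inj_on_def)
qed

lemma poly_pos_near_simple_root:
  fixes p :: "real poly"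
  assumes "poly p a = 0" "poly (pderiv p) a \<noteq> 0" "e > 0"
  obtains b where "\<bar>b - a\<bar> < e" "poly p b > 0"
proof (cases "poly (pderiv p) a > 0")
  case True
  obtain e' where "e' > 0" "\<forall>h>0. h < e' \<longrightarrow> poly p a < poly p (a + h)"
    using DERIV_pos_inc_right[OF poly_DERIV True] by blast
  then show ?thesis
    using that[of "a + min e e' / 2"] assms by auto
next
  case False
  with assms(2) have "poly (pderiv p) a < 0" by simp
  then obtain e' where "e' > 0" "\<forall>h>0. h < e' \<longrightarrow> poly p a < poly p (a - h)"
    using DERIV_neg_dec_left[OF poly_DERIV] by blast
  then show ?thesis
    using that[of "a - min e e' / 2"] assms by auto
qed

lemma exists_poly_pos_on_nonneg:
  fixes p :: "real poly"
  assumes "poly p 0 < 0" "a \<ge> 0" "poly p a \<ge> 0" "resultant p (pderiv p) \<noteq> 0"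
  obtains b where "b \<ge> 0" "poly p b > 0"
proof (cases "poly p a > 0")
  case True
  then show ?thesis using assms(2) that by blast
next
  case False
  with assms have root: "poly p a = 0" and "a > 0"
    by (auto simp: order.order_iff_strict)
  have "p \<noteq> 0" using assms(1) by auto
  then have "poly (pderiv p) a \<noteq> 0"
    using root assms(4) resultant_eq_0_if_common_root by blast
  then obtain b where "\<bar>b - a\<bar> < a" "poly p b > 0"
    using poly_pos_near_simple_root[OF root _ \<open>a > 0\<close>] by blast
  then show ?thesis
    using that[of b] by (simp add: abs_less_iff)
qed

lemma openin_tube:
  assumes W: "openin (prod_topology X Y) W" and K: "compactin Y K"
  shows "openin X {x \<in> topspace X. {x} \<times> K \<subseteq> W}"
proof (subst openin_subopen, intro ballI)
  fix x assume "x \<in> {x \<in> topspace X. {x} \<times> K \<subseteq> W}"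
  then have x: "x \<in> topspace X" "{x} \<times> K \<subseteq> W"
    by simp_all
  obtain U V where "openin X U" "openin Y V" "x \<in> U" "K \<subseteq> V" "U \<times> V \<subseteq> W"
    using tube_lemma_right[OF W K x] by blast
  moreover have "U \<subseteq> {x \<in> topspace X. {x} \<times> K \<subseteq> W}"
  proof
    fix u assume "u \<in> U"
    then have "u \<in> topspace X"
      using \<open>openin X U\<close> openin_subset by blast
    moreover have "{u} \<times> K \<subseteq> U \<times> V"
      using \<open>u \<in> U\<close> \<open>K \<subseteq> V\<close> by blast
    ultimately show "u \<in> {x \<in> topspace X. {x} \<times> K \<subseteq> W}"
      using \<open>U \<times> V \<subseteq> W\<close> by blast
  qed
  ultimately show "\<exists>T. openin X T \<and> x \<in> T \<and> T \<subseteq> {x \<in> topspace X. {x} \<times> K \<subseteq> W}"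
    by blast
qed

lemma Union_connected_components_meeting_clopen:
  assumes "openin X A" "closedin X A"
  shows "\<Union>{C \<in> connected_components_of X. C \<inter> A \<noteq> {}} = A"
proof (intro equalityI subsetI)
  fix x assume "x \<in> \<Union>{C \<in> connected_components_of X. C \<inter> A \<noteq> {}}"
  then obtain C where C: "C \<in> connected_components_of X" "C \<inter> A \<noteq> {}" "x \<in> C"
    by blast
  then have "C \<subseteq> A \<or> disjnt C A"
    using connectedin_clopen_cases[OF connectedin_connected_components_of assms(2,1)] by blast
  then show "x \<in> A"
    using C by (auto simp: disjnt_def)
next
  fix x assume "x \<in> A"
  then have "x \<in> topspace X"
    using assms(1) openin_subset by blast
  then have "connected_component_of_set X x \<in> connected_components_of X"
    and "x \<in> connected_component_of_set X x"
    by (simp_all add: connected_component_in_connected_components_of connected_component_of_refl)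
  with \<open>x \<in> A\<close> show "x \<in> \<Union>{C \<in> connected_components_of X. C \<inter> A \<noteq> {}}"
    by blast
qed

lemma borel_measurable_det:
  fixes A :: "'a \<Rightarrow> real mat"
  assumes "\<And>x. A x \<in> carrier_mat n n"
    and "\<And>i j. i < n \<Longrightarrow> j < n \<Longrightarrow> (\<lambda>x. A x $$ (i, j)) \<in> borel_measurable M"
  shows "(\<lambda>x. det (A x)) \<in> borel_measurable M"
proof -
  have "det (A x) = (\<Sum>p | p permutes {0..<n}. of_int (sign p) * (\<Prod>i = 0..<n. A x $$ (i, p i)))" for x
    using assms(1)[of x] by (simp add: det_def)
  moreover have "(\<lambda>x. \<Sum>p | p permutes {0..<n}. of_int (sign p) * (\<Prod>i = 0..<n. A x $$ (i, p i)))
      \<in> borel_measurable M"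
    by (intro borel_measurable_sum borel_measurable_times borel_measurable_const
        borel_measurable_prod assms(2)) (auto dest: permutes_in_image)
  ultimately show ?thesis by simp
qed

lemma borel_measurable_resultant_sub:
  fixes p q :: "'a \<Rightarrow> real poly"
  assumes "\<And>k. (\<lambda>x. coeff (p x) k) \<in> borel_measurable M"
    and "\<And>k. (\<lambda>x. coeff (q x) k) \<in> borel_measurable M"
  shows "(\<lambda>x. resultant_sub m n (p x) (q x)) \<in> borel_measurable M"
  unfolding resultant_sub_def
proof (rule borel_measurable_det[where n = "m + n"])
  fix i j assume "i < m + n" "j < m + n"
  then show "(\<lambda>x. sylvester_mat_sub m n (p x) (q x) $$ (i, j)) \<in> borel_measurable M"
    using assms[measurable] by (simp add: sylvester_mat_sub_index) measurable
qed (rule sylvester_mat_sub_carrier)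

lemma null_sets_PiM_if_slices_null:
  assumes M: "sigma_finite_measure M" and I: "finite I" "j \<in> I"
    and A: "A \<in> sets (Pi\<^sub>M I (\<lambda>_. M))"
    and slices: "\<And>x. x \<in> space (Pi\<^sub>M (I - {j}) (\<lambda>_. M)) \<Longrightarrow>
      \<exists>N\<in>null_sets M. \<forall>c\<in>space M. merge (I - {j}) {j} (x, \<lambda>_. c) \<in> A \<longrightarrow> c \<in> N"
  shows "A \<in> null_sets (Pi\<^sub>M I (\<lambda>_. M))"
proof -
  have M': "product_sigma_finite (\<lambda>_. M)"
    using M by (simp add: product_sigma_finite_def)
  let ?I = "I - {j}"
  have I_split: "?I \<union> {j} = I"
    using I(2) by blast
  have slice_null: "emeasure (Pi\<^sub>M {j} (\<lambda>_. M))
      ((\<lambda>y. merge ?I {j} (x, y)) -` A \<inter> space (Pi\<^sub>M {j} (\<lambda>_. M))) = 0"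
    if x: "x \<in> space (Pi\<^sub>M ?I (\<lambda>_. M))" for x
  proof -
    obtain N where N: "N \<in> null_sets M" "\<forall>c\<in>space M. merge ?I {j} (x, \<lambda>_. c) \<in> A \<longrightarrow> c \<in> N"
      using slices[OF x] by blast
    have slice_subset: "(\<lambda>y. merge ?I {j} (x, y)) -` A \<inter> space (Pi\<^sub>M {j} (\<lambda>_. M)) \<subseteq> Pi\<^sub>E {j} (\<lambda>_. N)"
    proof
      fix y assume y: "y \<in> (\<lambda>y. merge ?I {j} (x, y)) -` A \<inter> space (Pi\<^sub>M {j} (\<lambda>_. M))"
      have "merge ?I {j} (x, y) = merge ?I {j} (x, \<lambda>_. y j)"
        by (auto simp: merge_def fun_eq_iff)
      then have "y j \<in> N"
        using y N(2) by (auto simp: space_PiM)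
      then show "y \<in> Pi\<^sub>E {j} (\<lambda>_. N)"
        using y by (auto simp: space_PiM PiE_iff)
    qed
    have "emeasure (Pi\<^sub>M {j} (\<lambda>_. M)) (Pi\<^sub>E {j} (\<lambda>_. N)) = 0"
      using N(1) by (subst product_sigma_finite.emeasure_PiM[OF M']) (auto simp: null_setsD1)
    moreover have "Pi\<^sub>E {j} (\<lambda>_. N) \<in> sets (Pi\<^sub>M {j} (\<lambda>_. M))"
      using N(1) by (intro sets_PiM_I_finite) auto
    ultimately show ?thesis
      using emeasure_eq_0 slice_subset by blast
  qed
  have "A \<in> sets (Pi\<^sub>M (?I \<union> {j}) (\<lambda>_. M))"
    unfolding I_split by (rule A)
  then have "emeasure (Pi\<^sub>M (?I \<union> {j}) (\<lambda>_. M)) A =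
      (\<integral>\<^sup>+x. emeasure (Pi\<^sub>M {j} (\<lambda>_. M))
        ((\<lambda>y. merge ?I {j} (x, y)) -` A \<inter> space (Pi\<^sub>M {j} (\<lambda>_. M))) \<partial>Pi\<^sub>M ?I (\<lambda>_. M))"
    using I(1) by (intro product_sigma_finite.emeasure_fold_integral[OF M']) auto
  also have "\<dots> = (\<integral>\<^sup>+x. 0 \<partial>Pi\<^sub>M ?I (\<lambda>_. M))"
    by (rule nn_integral_cong) (rule slice_null)
  also have "\<dots> = 0"
    by simp
  finally have "emeasure (Pi\<^sub>M I (\<lambda>_. M)) A = 0"
    unfolding I_split .
  with A show ?thesis
    by (intro null_setsI)
qed

lemma poly_ppoly: "poly (ppoly d \<theta>) a = (\<Sum>k\<le>d. \<theta> (k, d - k) * a ^ k)"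
  unfolding ppoly_def by (simp add: poly_sum poly_monom)

lemma coeff_ppoly: "coeff (ppoly d \<theta>) k = (if k \<le> d then \<theta> (k, d - k) else 0)"
  unfolding ppoly_def by (auto simp: coeff_sum coeff_monom)

lemma poly_ppoly_0: "poly (ppoly d \<theta>) 0 = \<theta> (0, d)"
  by (simp add: poly_0_coeff_0 coeff_ppoly)

lemma degree_ppoly: "\<theta> (d, 0) \<noteq> 0 \<Longrightarrow> degree (ppoly d \<theta>) = d"
  by (intro antisym degree_le le_degree) (auto simp: coeff_ppoly)

lemma ppoly_fun_upd_const: "ppoly d (\<theta>((0, d) := c)) = ppoly d \<theta> + [:c - \<theta> (0, d):]"
  by (rule poly_eqI) (auto simp: coeff_ppoly coeff_pCons split: nat.split)

lemma discriminant_ppoly_eq_0_iff: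
  "\<theta> (d, 0) \<noteq> 0 \<Longrightarrow> discriminant (ppoly d \<theta>) = 0 \<longleftrightarrow> resultant (ppoly d \<theta>) (pderiv (ppoly d \<theta>)) = 0"
  by (simp add: discriminant_def degree_ppoly coeff_ppoly)

lemma coeff_index_in_idx: "1 \<le> d \<Longrightarrow> k \<le> d \<Longrightarrow> (k, d - k) \<in> idx d"
  unfolding idx_def by auto

lemma finite_idx: "finite (idx d)"
  by (rule finite_subset[of _ "{..d} \<times> {..d}"]) (auto simp: idx_def)

lemma topspace_param_top: "topspace (param_top d) = param_space d"
  by (simp add: param_top_def param_space_def)

lemma space_param_lebesgue: "space (param_lebesgue d) = param_space d"
  by (simp add: param_lebesgue_def param_space_def space_PiM)

lemma continuous_map_param_coord:
  "i \<in> idx d \<Longrightarrow> continuous_map (param_top d) euclideanreal (\<lambda>\<theta>. \<theta> i)"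
  unfolding param_top_def by (rule continuous_map_product_projection)

lemma continuous_map_poly_ppoly:
  "1 \<le> d \<Longrightarrow> continuous_map (param_top d) euclideanreal (\<lambda>\<theta>. poly (ppoly d \<theta>) a)"
  unfolding poly_ppoly
  by (intro continuous_map_sum continuous_map_real_mult continuous_map_param_coord
      coeff_index_in_idx continuous_map_const[THEN iffD2]) auto

section \<open>Theta1 \<inter> Theta2 is clopen in Theta2\<close>

(* Since
   p(a) = (1 + a)^d * ppoly_homog d theta (a / (1 + a)) and the value at u = 1 is theta_{d0},
   it moves the defining conditions of Theta1 to the compact interval [0, 1]. *)
definition ppoly_homog :: "nat \<Rightarrow> ((nat \<times> nat) \<Rightarrow> real) \<Rightarrow> real \<Rightarrow> real" where
  "ppoly_homog d \<theta> u = (\<Sum>k\<le>d. \<theta> (k, d - k) * u ^ k * (1 - u) ^ (d - k))"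

lemma poly_ppoly_eq_ppoly_homog:
  fixes a :: real
  assumes "a \<ge> 0"
  shows "poly (ppoly d \<theta>) a = (1 + a) ^ d * ppoly_homog d \<theta> (a / (1 + a))"
proof -
  have "(1 + a) ^ d * ((a / (1 + a)) ^ k * (1 - a / (1 + a)) ^ (d - k)) = a ^ k" if "k \<le> d" for k
  proof -
    have "1 - a / (1 + a) = 1 / (1 + a)" using assms by (simp add: field_simps)
    moreover have "(1 + a) ^ d = (1 + a) ^ k * (1 + a) ^ (d - k)"
      using that by (simp flip: power_add)
    ultimately show ?thesis using assms by (simp add: power_divide)
  qed
  then show ?thesis
    unfolding poly_ppoly ppoly_homog_def sum_distrib_left
    by (intro sum.cong) (auto simp: algebra_simps)
qed

lemma ppoly_homog_0: "ppoly_homog d \<theta> 0 = \<theta> (0, d)"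
proof -
  have "ppoly_homog d \<theta> 0 = (\<Sum>k\<le>d. if k = 0 then \<theta> (0, d) else 0)"
    unfolding ppoly_homog_def by (intro sum.cong) (auto simp: power_0_left)
  then show ?thesis by simp
qed

lemma ppoly_homog_1: "ppoly_homog d \<theta> 1 = \<theta> (d, 0)"
proof -
  have "ppoly_homog d \<theta> 1 = (\<Sum>k\<le>d. if k = d then \<theta> (d, 0) else 0)"
    unfolding ppoly_homog_def by (intro sum.cong) (auto simp: power_0_left)
  then show ?thesis by simp
qed

lemma Theta1_eq_ppoly_homog_neg: "Theta1 d = {\<theta> \<in> param_space d. \<forall>u\<in>{0..1}. ppoly_homog d \<theta> u < 0}"
proof (intro equalityI subsetI)
  fix \<theta> assume \<theta>: "\<theta> \<in> Theta1 d"
  have "ppoly_homog d \<theta> u < 0" if u: "u \<in> {0..1}" for u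
  proof (cases "u = 1")
    case True
    then show ?thesis using \<theta> by (simp add: ppoly_homog_1 Theta1_def)
  next
    case False
    define a where "a = u / (1 - u)"
    have a: "a \<ge> 0" "1 + a > 0" "a / (1 + a) = u"
      using u False by (auto simp: a_def field_simps)
    have "poly (ppoly d \<theta>) a < 0"
      using \<theta> a(1) by (simp add: Theta1_def)
    then have "(1 + a) ^ d * ppoly_homog d \<theta> u < 0"
      using poly_ppoly_eq_ppoly_homog[OF a(1), of d \<theta>] a(3) by simp
    then show ?thesis using a(2) by (simp add: mult_less_0_iff)
  qed
  then show "\<theta> \<in> {\<theta> \<in> param_space d. \<forall>u\<in>{0..1}. ppoly_homog d \<theta> u < 0}"
    using \<theta> by (simp add: Theta1_def)
next
  fix \<theta> assume \<theta>: "\<theta> \<in> {\<theta> \<in> param_space d. \<forall>u\<in>{0..1}. ppoly_homog d \<theta> u < 0}"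
  have "poly (ppoly d \<theta>) a < 0" if "a \<ge> 0" for a
  proof -
    have "a / (1 + a) \<in> {0..1}" using that by auto
    then show ?thesis using \<theta> that by (simp add: poly_ppoly_eq_ppoly_homog mult_pos_neg)
  qed
  moreover have "ppoly_homog d \<theta> 0 < 0" "ppoly_homog d \<theta> 1 < 0" using \<theta> by auto
  ultimately show "\<theta> \<in> Theta1 d"
    using \<theta> by (simp add: Theta1_def ppoly_homog_0 ppoly_homog_1)
qed

lemma continuous_map_ppoly_homog:
  assumes "1 \<le> d"
  shows "continuous_map (prod_topology (param_top d) euclideanreal) euclideanreal
    (\<lambda>z. ppoly_homog d (fst z) (snd z))"
proof -
  have coord: "continuous_map (prod_topology (param_top d) euclideanreal) euclideanreal (\<lambda>z. fst z i)"
    if "i \<in> idx d" for i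
    using continuous_map_compose[OF continuous_map_fst continuous_map_param_coord[OF that]]
    by (simp add: o_def)
  show ?thesis
    unfolding ppoly_homog_def
    by (intro continuous_map_sum continuous_map_real_mult continuous_map_real_pow continuous_map_diff
        continuous_map_snd continuous_map_const[THEN iffD2] coord coeff_index_in_idx assms) auto
qed

lemma openin_Theta1:
  assumes "1 \<le> d"
  shows "openin (param_top d) (Theta1 d)"
proof -
  let ?X = "prod_topology (param_top d) euclideanreal"
  let ?W = "{z \<in> topspace ?X. ppoly_homog d (fst z) (snd z) \<in> {..<0}}"
  have W: "openin ?X ?W"
    using continuous_map_ppoly_homog[OF assms] by (rule openin_continuous_map_preimage) auto
  have K: "compactin euclideanreal {0..1}"
    by simp
  have "Theta1 d = {\<theta> \<in> topspace (param_top d). {\<theta>} \<times> {0..1} \<subseteq> ?W}"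
    by (auto simp: Theta1_eq_ppoly_homog_neg topspace_param_top)
  then show ?thesis
    using openin_tube[OF W K] by simp
qed

lemma Theta2_diff_Theta1:
  "Theta2 d - Theta1 d = Theta2 d \<inter> (\<Union>b\<in>{0..}. {\<theta> \<in> param_space d. poly (ppoly d \<theta>) b > 0})"
proof (intro equalityI subsetI)
  fix \<theta> assume \<theta>: "\<theta> \<in> Theta2 d - Theta1 d"
  then have "\<theta> (0, d) < 0" "discriminant (ppoly d \<theta>) \<noteq> 0"
    by (auto simp: Theta2_def)
  moreover obtain a where "a \<ge> 0" "poly (ppoly d \<theta>) a \<ge> 0"
    using \<theta> by (force simp: Theta1_def Theta2_def)
  moreover have "ppoly d \<theta> \<noteq> 0"
    using \<open>\<theta> (0, d) < 0\<close> poly_ppoly_0[of d \<theta>] by auto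
  ultimately obtain b where "b \<ge> 0" "poly (ppoly d \<theta>) b > 0"
    using exists_poly_pos_on_nonneg[of "ppoly d \<theta>" a]
    by (auto simp: poly_ppoly_0 discriminant_def)
  then show "\<theta> \<in> Theta2 d \<inter> (\<Union>b\<in>{0..}. {\<theta> \<in> param_space d. poly (ppoly d \<theta>) b > 0})"
    using \<theta> by (auto simp: Theta2_def)
next
  fix \<theta> assume "\<theta> \<in> Theta2 d \<inter> (\<Union>b\<in>{0..}. {\<theta> \<in> param_space d. poly (ppoly d \<theta>) b > 0})"
  then show "\<theta> \<in> Theta2 d - Theta1 d"
    by (force simp: Theta1_def)
qed

lemma topspace_subtopology_Theta2: "topspace (subtopology (param_top d) (Theta2 d)) = Theta2 d"
  by (auto simp: Theta2_def topspace_param_top)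

lemma closedin_Theta2_Int_Theta1:
  assumes "1 \<le> d"
  shows "closedin (subtopology (param_top d) (Theta2 d)) (Theta2 d \<inter> Theta1 d)"
proof -
  have "openin (param_top d) {\<theta> \<in> param_space d. poly (ppoly d \<theta>) b > 0}" for b
    using openin_continuous_map_preimage[OF continuous_map_poly_ppoly[OF assms], of "{0<..}" b]
    by (simp add: topspace_param_top)
  then have "openin (subtopology (param_top d) (Theta2 d)) (Theta2 d - Theta1 d)"
    unfolding Theta2_diff_Theta1 by (intro openin_subtopology_Int2 openin_Union) auto
  moreover have "Theta2 d - Theta2 d \<inter> Theta1 d = Theta2 d - Theta1 d"
    by blast
  ultimately show ?thesis
    unfolding closedin_def topspace_subtopology_Theta2 by auto
qed

section \<open>The discriminant locus is null\<close>

definition discriminant_locus :: "nat \<Rightarrow> ((nat \<times> nat) \<Rightarrow> real) set" where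
  "discriminant_locus d = {\<theta> \<in> param_space d. \<theta> (d, 0) \<noteq> 0 \<and> discriminant (ppoly d \<theta>) = 0}"

lemma Theta1_diff_Theta2_subset: "Theta1 d - Theta2 d \<subseteq> discriminant_locus d"
  unfolding Theta1_def Theta2_def discriminant_locus_def by auto

lemma borel_measurable_coeff_ppoly:
  assumes "1 \<le> d"
  shows "(\<lambda>\<theta>. coeff (ppoly d \<theta>) k) \<in> borel_measurable (param_lebesgue d)"
proof (cases "k \<le> d")
  case True
  have "(\<lambda>\<theta>. \<theta> (k, d - k)) \<in> borel_measurable (param_lebesgue d)"
    using measurable_component_singleton[OF coeff_index_in_idx[OF assms True], of "\<lambda>_. lborel"]
    by (simp add: param_lebesgue_def)
  then show ?thesis using True by (simp add: coeff_ppoly)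
qed (simp add: coeff_ppoly)

lemma sets_discriminant_locus:
  assumes "1 \<le> d"
  shows "discriminant_locus d \<in> sets (param_lebesgue d)"
proof -
  have [measurable]: "(\<lambda>\<theta>. \<theta> (d, 0)) \<in> borel_measurable (param_lebesgue d)"
    using borel_measurable_coeff_ppoly[OF assms, of d] by (simp add: coeff_ppoly)
  have [measurable]: "(\<lambda>\<theta>. resultant_sub d (d - 1) (ppoly d \<theta>) (pderiv (ppoly d \<theta>)))
      \<in> borel_measurable (param_lebesgue d)"
    by (intro borel_measurable_resultant_sub borel_measurable_coeff_ppoly[OF assms])
      (simp add: coeff_pderiv borel_measurable_times borel_measurable_coeff_ppoly[OF assms])
  have "discriminant (ppoly d \<theta>) = 0 \<longleftrightarrow>
      resultant_sub d (d - 1) (ppoly d \<theta>) (pderiv (ppoly d \<theta>)) = 0" if "\<theta> (d, 0) \<noteq> 0" for \<theta>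
    using that by (simp add: discriminant_ppoly_eq_0_iff resultant_sub degree_pderiv degree_ppoly)
  then have locus_eq: "discriminant_locus d = {\<theta> \<in> space (param_lebesgue d).
      \<theta> (d, 0) \<noteq> 0 \<and> resultant_sub d (d - 1) (ppoly d \<theta>) (pderiv (ppoly d \<theta>)) = 0}"
    unfolding discriminant_locus_def space_param_lebesgue by blast
  show ?thesis
    unfolding locus_eq by measurable
qed

lemma null_sets_discriminant_locus:
  assumes d: "1 \<le> d"
  shows "discriminant_locus d \<in> null_sets (param_lebesgue d)"
  unfolding param_lebesgue_def
proof (rule null_sets_PiM_if_slices_null)
  show "discriminant_locus d \<in> sets (Pi\<^sub>M (idx d) (\<lambda>_. lborel))"
    using sets_discriminant_locus[OF d] by (simp add: param_lebesgue_def)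
  show "(0, d) \<in> idx d"
    using d by (simp add: idx_def)
  fix x :: "nat \<times> nat \<Rightarrow> real"
  assume "x \<in> space (Pi\<^sub>M (idx d - {(0, d)}) (\<lambda>_. lborel))"
  let ?\<theta> = "\<lambda>c. merge (idx d - {(0, d)}) {(0, d)} (x, \<lambda>_. c)"
  define q where "q = ppoly d (?\<theta> 0)"
  have lead: "?\<theta> c (d, 0) = x (d, 0)" for c
    using d by (simp add: idx_def)
  show "\<exists>N\<in>null_sets lborel. \<forall>c\<in>space lborel. ?\<theta> c \<in> discriminant_locus d \<longrightarrow> c \<in> N"
  proof (cases "x (d, 0) = 0")
    case True
    then show ?thesis
      using lead by (intro bexI[of _ "{}"]) (auto simp: discriminant_locus_def)
  next
    case False
    then have "degree q = d"
      using lead by (simp add: q_def degree_ppoly)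
    then have "pderiv q \<noteq> 0"
      using d by (simp add: pderiv_eq_0_iff)
    moreover have "resultant (q + [:c:]) (pderiv (q + [:c:])) = 0"
      if "?\<theta> c \<in> discriminant_locus d" for c
    proof -
      have "?\<theta> c = (?\<theta> 0)((0, d) := c)"
        by (auto simp: merge_def fun_eq_iff)
      then have eq: "ppoly d (?\<theta> c) = q + [:c:]"
        by (simp add: q_def ppoly_fun_upd_const)
      have "?\<theta> c (d, 0) \<noteq> 0" "discriminant (ppoly d (?\<theta> c)) = 0"
        using that lead[of c] False unfolding discriminant_locus_def by auto
      then have "resultant (ppoly d (?\<theta> c)) (pderiv (ppoly d (?\<theta> c))) = 0"
        using discriminant_ppoly_eq_0_iff by blast
      then show ?thesis
        unfolding eq .
    qed
    ultimately show ?thesis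
      by (intro bexI[of _ "{c. resultant (q + [:c:]) (pderiv (q + [:c:])) = 0}"]
          finite_imp_null_set_lborel finite_shifts_with_multiple_root) auto
  qed
qed (simp_all add: finite_idx sigma_finite_lborel)

theorem theorem6p3:
  fixes d :: nat
  assumes "d \<ge> 2"
  defines "Istar \<equiv> {C \<in> connected_components_of (subtopology (param_top d) (Theta2 d)).
                      C \<inter> Theta1 d \<noteq> {}}"
  shows "\<exists>Z \<in> null_sets (param_lebesgue d).
           (Theta1 d - \<Union>Istar) \<union> (\<Union>Istar - Theta1 d) \<subseteq> Z"
proof -
  have d: "1 \<le> d"
    using assms(1) by simp
  let ?X = "subtopology (param_top d) (Theta2 d)"
  have "\<Union>{C \<in> connected_components_of ?X. C \<inter> (Theta2 d \<inter> Theta1 d) \<noteq> {}}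
      = Theta2 d \<inter> Theta1 d"
    using openin_subtopology_Int2[OF openin_Theta1[OF d]] closedin_Theta2_Int_Theta1[OF d]
    by (rule Union_connected_components_meeting_clopen)
  moreover have "Istar = {C \<in> connected_components_of ?X. C \<inter> (Theta2 d \<inter> Theta1 d) \<noteq> {}}"
    unfolding Istar_def using connected_components_of_subset topspace_subtopology_Theta2 by blast
  ultimately have "(Theta1 d - \<Union>Istar) \<union> (\<Union>Istar - Theta1 d) = Theta1 d - Theta2 d"
    by blast
  then show ?thesis
    using Theta1_diff_Theta2_subset null_sets_discriminant_locus[OF d] by (intro bexI) auto
qed

end
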